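(* Let $M$ be a mould such that $M^0=0$, $M^1=0$, $M$ is alternal, and there exists a constant mould $C$ such that $\mathrm{swap}(M)+C$ is alternil. Then $M$ satisfies Ecalle's senary relation $$\mathrm{teru}(M)^r=\bigl(\mathrm{push}\circ\mathrm{mantar}\circ\mathrm{teru}\circ\mathrm{mantar}\bigr)(M)^r$$ for $r=1,2$ and $3$.
   Context: Moulds. A mould is a sequence $M=(M^m)_{m\geqslant 0}$ with $M^0\in\mathbb Q$ and $M^m=M^m(x_1,\dots,x_m)\in\mathbb Q[x_1,\dots,x_m]$; $M^m(u_1,\dots,u_m)$ denotes substitution $x_i\mapsto u_i$; $M$ is extended linearly to formal linear combinations of words by $(u_1,\dots,u_m)\mapsto M^m(u_1,\dots,u_m)$. A mould $C$ is constant if every $C^m$ is a rational number. For $m\geqslant1$: $\mathrm{teru}(M)^1=M^1$, and for $m\geqslant2$, $\mathrm{teru}(M)^m(u_1,\dots,u_m)=M^m(u_1,\dots,u_m)+\frac{1}{u_m}\{M^{m-1}(u_1,\dots,u_{m-2},u_{m-1}+u_m)-M^{m-1}(u_1,\dots,u_{m-2},u_{m-1})\}$; $\mathrm{mantar}(M)^m(u_1,\dots,u_m)=(-1)^{m-1}M^m(u_m,\dots,u_1)$; $\mathrm{push}(M)^m(u_1,\dots,u_m)=M^m(-u_1-\cdots-u_m,u_1,\dots,u_{m-1})$; $\mathrm{swap}(M)^m(v_1,\dots,v_m)=M^m(v_m,v_{m-1}-v_m,\dots,v_1-v_2)$ (in depth $0$: $\mathrm{teru},\mathrm{push},\mathrm{swap}$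 preserve $M^0$ and $\mathrm{mantar}(M)^0=-M^0$). $(M+C)^m=M^m+C^m$. Alternal: $M^0=0$ and for all $p,q\geqslant1$, $\sum_{w}M^{p+q}(w)=0$, the sum over all shuffles $w$ (counted with multiplicity) of the words $(x_1,\dots,x_p)$ and $(x_{p+1},\dots,x_{p+q})$. Alternil: define a bilinear product $\star$ on formal linear combinations of words in the letters $x_1,x_2,\dots$ with coefficients in $\mathbb Q(x_1,x_2,\dots)$ by $\emptyset\star\omega=\omega\star\emptyset=\omega$ and, for letters $u\neq v$ and words $\omega,\eta$, $u\omega\star v\eta=u(\omega\star v\eta)+v(u\omega\star\eta)+\frac{1}{u-v}\bigl(u(\omega\star\eta)-v(\omega\star\eta)\bigr)$. A mould $N$ is alternil if $N^0=0$ and for all $p,q\geqslant1$, applying $N$ (linearly, coefficients kept) to $(x_1,\dots,x_p)\star(x_{p+1},\dots,x_{p+q})$ gives $0$. *)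

theory Defs
  imports Complex_Main
begin

text \<open>A mould M is represented by its components: M m is a function
  on rational points of length m (only its values on lists of length m matter).
  Polynomial identities over Q are identities of polynomial functions on Q^m
  (Q is infinite).\<close>

type_synonym mould = "nat \<Rightarrow> rat list \<Rightarrow> rat"

inductive polyfun :: "nat \<Rightarrow> (rat list \<Rightarrow> rat) \<Rightarrow> bool" for n :: nat where
  pf_const: "polyfun n (\<lambda>_. c)"
| pf_var: "i < n \<Longrightarrow> polyfun n (\<lambda>u. u ! i)"
| pf_add: "polyfun n f \<Longrightarrow> polyfun n g \<Longrightarrow> polyfun n (\<lambda>u. f u + g u)"
| pf_mult: "polyfun n f \<Longrightarrow> polyfun n g \<Longrightarrow> polyfun n (\<lambda>u. f u * g u)"

definition is_mould :: "mould \<Rightarrow> bool" where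
  "is_mould M \<longleftrightarrow> (\<forall>m. \<exists>g. polyfun m g \<and> (\<forall>u. length u = m \<longrightarrow> M m u = g u))"

definition teru :: "mould \<Rightarrow> mould" where
  "teru M m u = (if m \<le> 1 then M m u
     else M m u + (1 / u ! (m - 1)) *
       (M (m - 1) (take (m - 2) u @ [u ! (m - 2) + u ! (m - 1)]) - M (m - 1) (take (m - 1) u)))"

definition mantar :: "mould \<Rightarrow> mould" where
  "mantar M m u = (if m = 0 then - M 0 u else (-1) ^ (m - 1) * M m (rev u))"

definition push :: "mould \<Rightarrow> mould" where
  "push M m u = (if m = 0 then M 0 u else M m ((- sum_list u) # take (m - 1) u))"

definition swap :: "mould \<Rightarrow> mould" where
  "swap M m v = (if m = 0 then M 0 v
     else M m (map (\<lambda>i. if i = 0 then v ! (m - 1) else v ! (m - 1 - i) - v ! (m - i)) [0..<m]))"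

fun shuffle_list :: "'a list \<Rightarrow> 'a list \<Rightarrow> 'a list list" where
  "shuffle_list [] w = [w]"
| "shuffle_list w [] = [w]"
| "shuffle_list (a # as) (b # bs) =
     map ((#) a) (shuffle_list as (b # bs)) @ map ((#) b) (shuffle_list (a # as) bs)"

definition alternal :: "mould \<Rightarrow> bool" where
  "alternal M \<longleftrightarrow> (\<forall>u. M 0 u = 0) \<and>
     (\<forall>a b. a \<noteq> [] \<longrightarrow> b \<noteq> [] \<longrightarrow>
        sum_list (map (M (length a + length b)) (shuffle_list a b)) = 0)"

text \<open>The alternil product on words of letter indices (letter i stands for the
  variable x_i), with coefficients evaluated at the point x (assignment of values
  to the variables).  Result: a formal linear combination as a list of
  (coefficient, word) pairs.\<close>
fun star :: "(nat \<Rightarrow> rat) \<Rightarrow> nat list \<Rightarrow> nat list \<Rightarrow> (rat \<times> nat list) list" where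
  "star x [] w = [(1, w)]"
| "star x w [] = [(1, w)]"
| "star x (u # \<omega>) (v # \<eta>) =
     map (\<lambda>(c, w). (c, u # w)) (star x \<omega> (v # \<eta>))
   @ map (\<lambda>(c, w). (c, v # w)) (star x (u # \<omega>) \<eta>)
   @ map (\<lambda>(c, w). (c / (x u - x v), u # w)) (star x \<omega> \<eta>)
   @ map (\<lambda>(c, w). (- c / (x u - x v), v # w)) (star x \<omega> \<eta>)"

text \<open>Alternil: the identity of rational functions in x_1..x_{p+q} is expressed
  by evaluation at all points with pairwise distinct coordinates (where all
  denominators are nonzero).  Letters are indexed from 0.\<close>
definition alternil :: "mould \<Rightarrow> bool" where
  "alternil N \<longleftrightarrow> (\<forall>u. N 0 u = 0) \<and>
     (\<forall>p q (x :: nat \<Rightarrow> rat). p \<ge> 1 \<longrightarrow> q \<ge> 1 \<longrightarrow> inj_on x {0..<p + q} \<longrightarrow>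
        sum_list (map (\<lambda>(c, w). c * N (length w) (map x w))
                      (star x [0..<p] [p..<p + q])) = 0)"

end

theory Submission
  imports Defs "HOL-Computational_Algebra.Polynomial"
begin

text \<open>In depth 1 both sides vanish since M 1 = 0.  In depth 2, the alternility of swap M + C
  combined with the antisymmetry of M says M(x, y) - M(-y, x + y) = -2 C 2; going once
  around the 6-cycle of this substitution forces C 2 = 0, and applying it twice is the
  senary relation.  In depth 3, two alternility relations of swap M + C and six shuffle
  relations of M give the senary relation wherever a, b, c, b + c and a + b + c are
  nonzero.  Multiplied by c (a + b + c), the relation is polynomial along the line
  t \<mapsto> (a + t, b + t, c + t), and it vanishes for all but finitely many t, hence
  everywhere.\<close>

lemma teru_depth2: "teru M 2 [a, b] = M 2 [a, b] + (M 1 [a + b] - M 1 [a]) / b"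
  by (simp add: teru_def numeral_eq_Suc)

lemma teru_depth3: "teru M 3 [a, b, c] = M 3 [a, b, c] + (M 2 [a, b + c] - M 2 [a, b]) / c"
  by (simp add: teru_def numeral_eq_Suc)

lemma push_mantar_teru_mantar_depth2:
  "push (mantar (teru (mantar M))) 2 [a, b] = M 2 [- (a + b), a] + (M 1 [- b] - M 1 [a]) / (a + b)"
  by (simp add: push_def mantar_def teru_def numeral_eq_Suc diff_divide_distrib
      del: minus_add_distrib)

lemma push_mantar_teru_mantar_depth3:
  "push (mantar (teru (mantar M))) 3 [a, b, c]
     = M 3 [- (a + b + c), a, b] + (M 2 [- (b + c), b] - M 2 [a, b]) / (a + b + c)"
  by (simp add: push_def mantar_def teru_def numeral_eq_Suc diff_divide_distrib add.assoc
      del: minus_add_distrib) simp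

lemma swap_depth2: "swap M 2 [v1, v2] = M 2 [v2, v1 - v2]"
  by (simp add: swap_def upt_rec numeral_eq_Suc)

lemma swap_depth3: "swap M 3 [v1, v2, v3] = M 3 [v3, v2 - v3, v1 - v2]"
  by (simp add: swap_def upt_rec numeral_eq_Suc)

lemma alternal_shuffle_sum:
  "alternal M \<Longrightarrow> a \<noteq> [] \<Longrightarrow> b \<noteq> [] \<Longrightarrow>
     sum_list (map (M (length a + length b)) (shuffle_list a b)) = 0"
  unfolding alternal_def by blast

lemma alternal_depth2: "alternal M \<Longrightarrow> M 2 [b, a] = - M 2 [a, b]"
  using alternal_shuffle_sum[of M "[a]" "[b]"]
  by (simp add: numeral_eq_Suc eq_neg_iff_add_eq_0 add.commute)

lemma alternal_shuffle_1_2: "alternal M \<Longrightarrow> M 3 [a, b, c] + M 3 [b, a, c] + M 3 [b, c, a] = 0"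
  using alternal_shuffle_sum[of M "[a]" "[b, c]"] by (simp add: add.assoc numeral_eq_Suc)

lemma alternal_shuffle_2_1: "alternal M \<Longrightarrow> M 3 [a, b, c] + M 3 [a, c, b] + M 3 [c, a, b] = 0"
  using alternal_shuffle_sum[of M "[a, b]" "[c]"] by (simp add: add.assoc numeral_eq_Suc)

lemma alternil_star_sum:
  "alternil N \<Longrightarrow> 1 \<le> p \<Longrightarrow> 1 \<le> q \<Longrightarrow> inj_on x {0..<p + q} \<Longrightarrow>
     sum_list (map (\<lambda>(c, w). c * N (length w) (map x w)) (star x [0..<p] [p..<p + q])) = 0"
  unfolding alternil_def by blast

lemma alternil_depth2:
  assumes "alternil N" "x0 \<noteq> x1"
  shows "N 2 [x0, x1] + N 2 [x1, x0] + (N 1 [x0] - N 1 [x1]) / (x0 - x1) = 0"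
proof -
  have "inj_on ((!) [x0, x1]) {0..<1 + 1}"
    using assms(2) by (auto simp: inj_on_def less_Suc_eq)
  from alternil_star_sum[OF assms(1) _ _ this] show ?thesis
    by (simp add: upt_rec numeral_eq_Suc diff_divide_distrib)
qed

lemma alternil_depth3:
  assumes "alternil N" "distinct [x0, x1, x2]"
  shows "N 3 [x0, x1, x2] + N 3 [x1, x0, x2] + N 3 [x1, x2, x0]
     + (N 2 [x1, x0] - N 2 [x1, x2]) / (x0 - x2) + (N 2 [x0, x2] - N 2 [x1, x2]) / (x0 - x1) = 0"
proof -
  have "inj_on ((!) [x0, x1, x2]) {0..<1 + 2}"
    using assms(2) by (auto simp: inj_on_def less_Suc_eq numeral_eq_Suc)
  from alternil_star_sum[OF assms(1) _ _ this] show ?thesis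
    by (simp add: upt_rec numeral_eq_Suc diff_divide_distrib)
qed

lemma alternil_swap_depth2:
  assumes "alternil (\<lambda>m u. swap M m u + C m)" "b \<noteq> 0"
  shows "M 2 [a, b] + M 2 [a + b, - b] + 2 * C 2 + (M 1 [a + b] - M 1 [a]) / b = 0"
proof -
  have "swap M 1 [v] = M 1 [v]" for v
    by (simp add: swap_def)
  then show ?thesis
    using alternil_depth2[OF assms(1), of "a + b" a] assms(2)
    by (simp add: swap_depth2 algebra_simps diff_divide_distrib)
qed

lemma alternil_swap_depth3:
  assumes "alternil (\<lambda>m u. swap M m u + C m)" "b \<noteq> 0" "c \<noteq> 0" "b + c \<noteq> 0"
  shows "M 3 [a, b, c] + M 3 [a, b + c, - c] + M 3 [a + b + c, - (b + c), b] + 3 * C 3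
     + (M 2 [a + b + c, - c] - M 2 [a, b]) / (b + c) + (M 2 [a, b + c] - M 2 [a, b]) / c = 0"
  using alternil_depth3[OF assms(1), of "a + b + c" "a + b" a] assms(2-4)
  by (simp add: swap_depth3 swap_depth2 algebra_simps diff_divide_distrib)

lemma alternil_swap_shift_depth2:
  assumes "alternal M" "alternil (\<lambda>m u. swap M m u + C m)" "\<forall>u. M 1 u = 0" "y \<noteq> 0"
  shows "M 2 [x, y] - M 2 [- y, x + y] = - 2 * C 2"
  using alternil_swap_depth2[OF assms(2,4), of x] assms(3)
    alternal_depth2[OF assms(1), of "- y" "x + y"]
  by simp

text \<open>The substitution (x, y) \<mapsto> (-y, x + y) has order 6, so summing the shift relation
  along the orbit of (1, 1) gives 12 * C 2 = 0.\<close>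

lemma alternil_swap_depth2_const_eq_0:
  assumes "alternal M" "alternil (\<lambda>m u. swap M m u + C m)" "\<forall>u. M 1 u = 0"
  shows "C 2 = 0"
proof -
  note shift = alternil_swap_shift_depth2[OF assms]
  have "M 2 [1, 1] - M 2 [- 1, 2] = - 2 * C 2"
       "M 2 [- 1, 2] - M 2 [- 2, 1] = - 2 * C 2"
       "M 2 [- 2, 1] - M 2 [- 1, - 1] = - 2 * C 2"
       "M 2 [- 1, - 1] - M 2 [1, - 2] = - 2 * C 2"
       "M 2 [1, - 2] - M 2 [2, - 1] = - 2 * C 2"
       "M 2 [2, - 1] - M 2 [1, 1] = - 2 * C 2"
    using shift[of 1 1] shift[of 2 "- 1"] shift[of 1 "- 2"] shift[of "- 1" "- 1"]
      shift[of "- 2" 1] shift[of "- 1" 2]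
    by simp_all
  then show ?thesis by linarith
qed

lemma senary_depth2:
  assumes "alternal M" "alternil (\<lambda>m u. swap M m u + C m)" "\<forall>u. M 1 u = 0"
    and "b \<noteq> 0" "a + b \<noteq> 0"
  shows "M 2 [a, b] = M 2 [- (a + b), a]"
  using alternil_swap_shift_depth2[OF assms(1-3), of b a]
    alternil_swap_shift_depth2[OF assms(1-3), of "a + b" "- b"]
    alternil_swap_depth2_const_eq_0[OF assms(1-3)] assms(4,5)
  by simp

text \<open>Subtracting the alternility relations of swap M + C at (a, b, c) and at
  (b, a, -(a + b + c)) cancels C 3; the shuffle relations of M then identify the
  remaining depth-3 terms.\<close>

lemma senary_depth3_generic:
  assumes alternal: "alternal M" and alternil: "alternil (\<lambda>m u. swap M m u + C m)"
    and nz: "a \<noteq> 0" "b \<noteq> 0" "c \<noteq> 0" "b + c \<noteq> 0" "a + b + c \<noteq> 0"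
  shows "M 3 [a, b, c] + (M 2 [a, b + c] - M 2 [a, b]) / c
       = M 3 [- (a + b + c), a, b] + (M 2 [- (b + c), b] - M 2 [a, b]) / (a + b + c)"
proof -
  define s where "s = a + b + c"
  have rel_abc: "M 3 [a, b, c] + M 3 [a, b + c, - c] + M 3 [s, - (b + c), b] + 3 * C 3
      + (M 2 [s, - c] - M 2 [a, b]) / (b + c) + (M 2 [a, b + c] - M 2 [a, b]) / c = 0"
    using alternil_swap_depth3[OF alternil, of b c a] nz s_def by simp
  have rel_b_a_neg_s: "M 3 [b, a, - s] + M 3 [b, - (b + c), s] + M 3 [- c, b + c, a] + 3 * C 3
      + (M 2 [- c, s] - M 2 [b, a]) / (- (b + c)) + (M 2 [b, - (b + c)] - M 2 [b, a]) / (- s) = 0"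
    using alternil_swap_depth3[OF alternil, of a "- s" b] nz s_def by (simp add: algebra_simps)
  have "(M 2 [- c, s] - M 2 [b, a]) / (- (b + c)) = (M 2 [s, - c] - M 2 [a, b]) / (b + c)"
       "(M 2 [b, - (b + c)] - M 2 [b, a]) / (- s) = (M 2 [- (b + c), b] - M 2 [a, b]) / s"
    unfolding alternal_depth2[OF alternal, of s "- c"] alternal_depth2[OF alternal, of a b]
      alternal_depth2[OF alternal, of "- (b + c)" b]
    by (simp_all only: minus_diff_minus divide_minus_left divide_minus_right minus_minus)
  note rel_b_a_neg_s' = rel_b_a_neg_s[unfolded this]
  show ?thesis
    unfolding s_def[symmetric]
    using rel_abc rel_b_a_neg_s'
      alternal_shuffle_2_1[OF alternal, of "- s" a b]
      alternal_shuffle_1_2[OF alternal, of "- s" b a]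
      alternal_shuffle_2_1[OF alternal, of a "b + c" "- c"]
      alternal_shuffle_1_2[OF alternal, of a "- c" "b + c"]
      alternal_shuffle_2_1[OF alternal, of s "- (b + c)" b]
      alternal_shuffle_1_2[OF alternal, of s b "- (b + c)"]
    by linarith
qed

definition poly_function :: "('a::comm_ring_1 \<Rightarrow> 'a) \<Rightarrow> bool" where
  "poly_function f \<longleftrightarrow> (\<exists>p. f = poly p)"

lemma poly_function_const: "poly_function (\<lambda>t. c)"
  unfolding poly_function_def by (rule exI[of _ "[:c:]"]) auto

lemma poly_function_ident: "poly_function (\<lambda>t. t)"
  unfolding poly_function_def by (rule exI[of _ "[:0, 1:]"]) auto

lemma poly_function_add:
  assumes "poly_function f" "poly_function g"
  shows "poly_function (\<lambda>t. f t + g t)"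
proof -
  from assms obtain p q where "f = poly p" "g = poly q"
    unfolding poly_function_def by blast
  then show ?thesis
    unfolding poly_function_def by (intro exI[of _ "p + q"]) (simp add: fun_eq_iff)
qed

lemma poly_function_diff:
  assumes "poly_function f" "poly_function g"
  shows "poly_function (\<lambda>t. f t - g t)"
proof -
  from assms obtain p q where "f = poly p" "g = poly q"
    unfolding poly_function_def by blast
  then show ?thesis
    unfolding poly_function_def by (intro exI[of _ "p - q"]) (simp add: fun_eq_iff)
qed

lemma poly_function_mult:
  assumes "poly_function f" "poly_function g"
  shows "poly_function (\<lambda>t. f t * g t)"
proof -
  from assms obtain p q where "f = poly p" "g = poly q"
    unfolding poly_function_def by blast
  then show ?thesis
    unfolding poly_function_def by (intro exI[of _ "p * q"]) (simp add: fun_eq_iff)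
qed

lemma poly_function_eq_0_cofinite:
  fixes f :: "'a::{idom, ring_char_0} \<Rightarrow> 'a"
  assumes "poly_function f" "finite B" "\<And>t. t \<notin> B \<Longrightarrow> f t = 0"
  shows "f x = 0"
proof -
  obtain p where p: "f = poly p"
    using assms(1) unfolding poly_function_def by blast
  have "p = 0"
  proof (rule ccontr)
    assume "p \<noteq> 0"
    then have "finite (B \<union> {t. poly p t = 0})"
      using assms(2) poly_roots_finite by blast
    moreover have "B \<union> {t. poly p t = 0} = UNIV"
      using assms(3) p by auto
    ultimately show False
      using infinite_UNIV_char_0[where 'a='a] by simp
  qed
  then show ?thesis using p by simp
qed

lemma polyfun_along_line:
  assumes "polyfun n g" "length xs = n" "length ys = n"
  shows "poly_function (\<lambda>t. g (map2 (\<lambda>x y. x + t * y) xs ys))"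
  using assms(1)
proof induction
  case (pf_const c)
  show ?case by (rule poly_function_const)
next
  case (pf_var i)
  have "poly_function (\<lambda>t. xs ! i + t * ys ! i)"
    by (intro poly_function_add poly_function_mult poly_function_const poly_function_ident)
  with pf_var assms(2,3) show ?case by simp
next
  case (pf_add f g)
  then show ?case by (intro poly_function_add pf_add.IH)
next
  case (pf_mult f g)
  then show ?case by (intro poly_function_mult pf_mult.IH)
qed

lemma mould_along_line:
  assumes "is_mould M" "length xs = m" "length ys = m"
  shows "poly_function (\<lambda>t. M m (map2 (\<lambda>x y. x + t * y) xs ys))"
proof -
  obtain g where "polyfun m g" and g: "\<And>u. length u = m \<Longrightarrow> M m u = g u"
    using assms(1) unfolding is_mould_def by blast
  then show ?thesis
    using polyfun_along_line[of m g xs ys] assms(2,3) by (simp add: g)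
qed

text \<open>The depth-3 senary relation with its denominators c and a + b + c cleared, so that
  it becomes polynomial along lines.\<close>

definition senary_defect3 :: "mould \<Rightarrow> rat \<Rightarrow> rat \<Rightarrow> rat \<Rightarrow> rat" where
  "senary_defect3 M a b c =
     c * (a + b + c) * (M 3 [a, b, c] - M 3 [- (a + b + c), a, b])
     + (a + b + c) * (M 2 [a, b + c] - M 2 [a, b]) - c * (M 2 [- (b + c), b] - M 2 [a, b])"

lemma senary_defect3_eq_0_iff:
  assumes "c \<noteq> 0" "a + b + c \<noteq> 0"
  shows "senary_defect3 M a b c = 0 \<longleftrightarrow>
    M 3 [a, b, c] + (M 2 [a, b + c] - M 2 [a, b]) / c
      = M 3 [- (a + b + c), a, b] + (M 2 [- (b + c), b] - M 2 [a, b]) / (a + b + c)"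
  using assms unfolding senary_defect3_def by (auto simp: field_simps)

lemma senary_defect3_along_diagonal:
  assumes "is_mould M"
  shows "poly_function (\<lambda>t. senary_defect3 M (a + t) (b + t) (c + t))"
proof -
  have line: "poly_function (\<lambda>t. M m (u t))"
    if "\<And>t. u t = map2 (\<lambda>x y. x + t * y) xs ys" "length xs = m" "length ys = m"
    for u m xs ys
    using mould_along_line[OF assms that(2,3)] that(1) by simp
  have "poly_function (\<lambda>t. M 3 [a + t, b + t, c + t])"
    by (rule line[where xs = "[a, b, c]" and ys = "[1, 1, 1]"]) auto
  moreover have "poly_function (\<lambda>t. M 3 [- (a + t + (b + t) + (c + t)), a + t, b + t])"
    by (rule line[where xs = "[- (a + b + c), a, b]" and ys = "[- 3, 1, 1]"]) auto
  moreover have "poly_function (\<lambda>t. M 2 [a + t, b + t + (c + t)])"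
    by (rule line[where xs = "[a, b + c]" and ys = "[1, 2]"]) auto
  moreover have "poly_function (\<lambda>t. M 2 [a + t, b + t])"
    by (rule line[where xs = "[a, b]" and ys = "[1, 1]"]) auto
  moreover have "poly_function (\<lambda>t. M 2 [- (b + t + (c + t)), b + t])"
    by (rule line[where xs = "[- (b + c), b]" and ys = "[- 2, 1]"]) auto
  ultimately show ?thesis
    unfolding senary_defect3_def
    by (intro poly_function_add poly_function_diff poly_function_mult poly_function_const
        poly_function_ident)
qed

lemma senary_depth3:
  assumes "is_mould M" "alternal M" "alternil (\<lambda>m u. swap M m u + C m)"
    and "c \<noteq> 0" "a + b + c \<noteq> 0"
  shows "M 3 [a, b, c] + (M 2 [a, b + c] - M 2 [a, b]) / c
       = M 3 [- (a + b + c), a, b] + (M 2 [- (b + c), b] - M 2 [a, b]) / (a + b + c)"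
proof -
  let ?B = "{- a, - b, - c, - (b + c) / 2, - (a + b + c) / 3}"
  have vanish: "senary_defect3 M (a + t) (b + t) (c + t) = 0" if "t \<notin> ?B" for t
  proof -
    have nz: "a + t \<noteq> 0" "b + t \<noteq> 0" "c + t \<noteq> 0" "b + t + (c + t) \<noteq> 0"
      "a + t + (b + t) + (c + t) \<noteq> 0"
      using that by (auto simp: add_eq_0_iff field_simps)
    show ?thesis
      using senary_depth3_generic[OF assms(2,3) nz] senary_defect3_eq_0_iff[OF nz(3,5)] by simp
  qed
  have "senary_defect3 M (a + 0) (b + 0) (c + 0) = 0"
    by (rule poly_function_eq_0_cofinite[OF senary_defect3_along_diagonal[OF assms(1)],
          where B = ?B])
      (simp_all add: vanish)
  then show ?thesis
    using senary_defect3_eq_0_iff[OF assms(4,5)] by simp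
qed

theorem proposition4p2:
  fixes M :: mould
  assumes "is_mould M"
    and "\<forall>u. M 0 u = 0"
    and "\<forall>u. M 1 u = 0"
    and "alternal M"
    and "\<exists>C :: nat \<Rightarrow> rat. alternil (\<lambda>m u. swap M m u + C m)"
  shows "\<forall>r \<in> {1, 2, 3}. \<forall>u. length u = r \<and> u ! (r - 1) \<noteq> 0 \<and> sum_list u \<noteq> 0 \<longrightarrow>
           teru M r u = push (mantar (teru (mantar M))) r u"
proof (intro ballI allI impI)
  fix r :: nat and u :: "rat list"
  assume "r \<in> {1, 2, 3}" and u: "length u = r \<and> u ! (r - 1) \<noteq> 0 \<and> sum_list u \<noteq> 0"
  obtain C where alternil: "alternil (\<lambda>m u. swap M m u + C m)"
    using assms(5) by blast
  from \<open>r \<in> {1, 2, 3}\<close> consider "r = 1" | "r = 2" | "r = 3"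
    by blast
  then show "teru M r u = push (mantar (teru (mantar M))) r u"
  proof cases
    case 1
    then obtain a where "u = [a]"
      using u by (auto simp: length_Suc_conv)
    with 1 show ?thesis
      using assms(3) by (simp add: teru_def push_def mantar_def)
  next
    case 2
    then obtain a b where ab: "u = [a, b]"
      using u by (auto simp: length_Suc_conv numeral_eq_Suc)
    with 2 u have "b \<noteq> 0" "a + b \<noteq> 0"
      by auto
    with 2 ab show ?thesis
      using senary_depth2[OF assms(4) alternil assms(3) \<open>b \<noteq> 0\<close> \<open>a + b \<noteq> 0\<close>] assms(3)
      by (simp add: teru_depth2 push_mantar_teru_mantar_depth2)
  next
    case 3
    then obtain a b c where abc: "u = [a, b, c]"
      using u by (auto simp: length_Suc_conv numeral_eq_Suc)
    with 3 u have "c \<noteq> 0" "a + b + c \<noteq> 0"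
      by (auto simp: add.assoc)
    with 3 abc show ?thesis
      using senary_depth3[OF assms(1,4) alternil \<open>c \<noteq> 0\<close> \<open>a + b + c \<noteq> 0\<close>]
      by (simp add: teru_depth3 push_mantar_teru_mantar_depth3)
  qed
qed

end
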